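(* Let $B$ be a Banach left $A$-module and suppose there is a bounded net $(e''_\alpha)_\alpha\subseteq A^{**}$ such that $\pi_\ell^{***}(e''_\alpha,b'')\to b''$ in norm for every $b''\in B^{**}$. Then there exists $e''\in A^{**}$ with $\pi_\ell^{***}(e'',b'')=b''$ for all $b''\in B^{**}$.
   Context: $A$ is a Banach algebra and $B$ a Banach left $A$-module with action $\pi_\ell:A\times B\to B$. For a bounded bilinear $m:X\times Y\to Z$: $m^*:Z^*\times X\to Y^*$, $\langle m^*(z',x),y\rangle=\langle z',m(x,y)\rangle$; $m^{**}:Y^{**}\times Z^*\to X^*$, $\langle m^{**}(y'',z'),x\rangle=\langle y'',m^*(z',x)\rangle$; $m^{***}:X^{**}\times Y^{**}\to Z^{**}$, $\langle m^{***}(x'',y''),z'\rangle=\langle x'',m^{**}(y'',z')\rangle$. *)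

theory Defs
  imports "HOL-Analysis.Analysis"
begin

type_synonym 'a dual = "'a \<Rightarrow>\<^sub>L real"

definition adj1 :: "('x \<Rightarrow> 'y::real_normed_vector \<Rightarrow> 'z::real_normed_vector)
    \<Rightarrow> 'z dual \<Rightarrow> 'x \<Rightarrow> 'y dual" where
  "adj1 m z' x = Blinfun (\<lambda>y. blinfun_apply z' (m x y))"

definition adj2 :: "('x::real_normed_vector \<Rightarrow> 'y::real_normed_vector \<Rightarrow> 'z::real_normed_vector)
    \<Rightarrow> 'y dual dual \<Rightarrow> 'z dual \<Rightarrow> 'x dual" where
  "adj2 m y'' z' = Blinfun (\<lambda>x. blinfun_apply y'' (adj1 m z' x))"

definition adj3 :: "('x::real_normed_vector \<Rightarrow> 'y::real_normed_vector \<Rightarrow> 'z::real_normed_vector)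
    \<Rightarrow> 'x dual dual \<Rightarrow> 'y dual dual \<Rightarrow> 'z dual dual" where
  "adj3 m x'' y'' = Blinfun (\<lambda>z'. blinfun_apply x'' (adj2 m y'' z'))"

definition banach_left_module ::
  "('a::{real_normed_algebra,banach} \<Rightarrow> 'b::banach \<Rightarrow> 'b) \<Rightarrow> bool" where
  "banach_left_module \<pi> \<longleftrightarrow> bounded_bilinear \<pi> \<and>
     (\<forall>a c b. \<pi> (a * c) b = \<pi> a (\<pi> c b))"

end

theory Submission
  imports Defs
begin

(* Any weak* cluster point e'' of a bounded
   net in A** agrees with the net's pointwise limits wherever those exist (Banach-Alaoglu),
   and by the hypothesis e_i(pi**(b'',z')) = pi***(e_i,b'')(z') converges to b''(z'); hence
   pi***(e'',b'')(z') = e''(pi**(b'',z')) = b''(z') for all z', i.e. e'' is a right identity. *)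

lemma adj1_apply:
  assumes "bounded_bilinear m"
  shows "blinfun_apply (adj1 m z' x) y = blinfun_apply z' (m x y)"
  unfolding adj1_def
  by (subst bounded_linear_Blinfun_apply)
     (auto intro: bounded_linear_compose[OF blinfun.bounded_linear_right
                    bounded_bilinear.bounded_linear_right[OF assms]])

lemma bounded_bilinear_adj1:
  assumes m: "bounded_bilinear m"
  shows "bounded_bilinear (adj1 m)"
proof -
  obtain K where K: "K \<ge> 0" "\<And>x y. norm (m x y) \<le> norm x * norm y * K"
    using bounded_bilinear.nonneg_bounded[OF m] by blast
  have norm_adj1: "norm (adj1 m z' x) \<le> norm z' * norm x * K" for z' x
  proof (rule norm_blinfun_bound)
    show "0 \<le> norm z' * norm x * K" using K by simp
    fix y
    have "norm (blinfun_apply z' (m x y)) \<le> norm z' * norm (m x y)" by (rule norm_blinfun)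
    also have "\<dots> \<le> norm z' * (norm x * norm y * K)" using K by (simp add: mult_left_mono)
    finally show "norm (blinfun_apply (adj1 m z' x) y) \<le> norm z' * norm x * K * norm y"
      by (simp add: adj1_apply[OF m] algebra_simps)
  qed
  show ?thesis
  proof
    show "adj1 m (z1 + z2) x = adj1 m z1 x + adj1 m z2 x" for z1 z2 x
      by (rule blinfun_eqI) (simp add: adj1_apply[OF m] blinfun.add_left plus_blinfun.rep_eq)
    show "adj1 m z' (x1 + x2) = adj1 m z' x1 + adj1 m z' x2" for z' x1 x2
      by (rule blinfun_eqI)
         (simp add: adj1_apply[OF m] bounded_bilinear.add_left[OF m] blinfun.add_right
                        plus_blinfun.rep_eq)
    show "adj1 m (r *\<^sub>R z') x = r *\<^sub>R adj1 m z' x" for r z' x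
      by (rule blinfun_eqI) (simp add: adj1_apply[OF m] scaleR_blinfun.rep_eq)
    show "adj1 m z' (r *\<^sub>R x) = r *\<^sub>R adj1 m z' x" for r z' x
      by (rule blinfun_eqI)
         (simp add: adj1_apply[OF m] bounded_bilinear.scaleR_left[OF m] blinfun.scaleR_right
                        scaleR_blinfun.rep_eq)
    show "\<exists>K. \<forall>z' x. norm (adj1 m z' x) \<le> norm z' * norm x * K"
      using norm_adj1 by blast
  qed
qed

lemma adj2_eq_adj1: "adj2 m = adj1 (adj1 m)"
  by (intro ext) (simp add: adj1_def adj2_def)

lemma adj3_eq_adj1: "adj3 m = adj1 (adj2 m)"
  by (intro ext) (simp add: adj1_def adj3_def)

lemma adj3_apply:
  assumes "bounded_bilinear m"
  shows "blinfun_apply (adj3 m x'' y'') z' = blinfun_apply x'' (adj2 m y'' z')"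
  using assms unfolding adj3_eq_adj1 adj2_eq_adj1
  by (intro adj1_apply bounded_bilinear_adj1)

lemma cluster_point_in_closed:
  assumes "inf (nhds f) G \<noteq> bot" "closed C" "eventually (\<lambda>g. g \<in> C) G"
  shows "f \<in> C"
proof (rule ccontr)
  assume "f \<notin> C"
  then have "eventually (\<lambda>g. g \<in> - C) (nhds f)"
    using assms(2) by (intro eventually_nhds_in_open) auto
  then have "eventually (\<lambda>_. False) (inf (nhds f) G)"
    using assms(3) unfolding eventually_inf by blast
  then show False using assms(1) by (simp add: eventually_False)
qed

text \<open>Tychonoff: the functions bounded pointwise by M times the norm form a compact set in
  the topology of pointwise convergence.\<close>

lemma compact_pointwise_bounded:
  "compact {g :: 'x::real_normed_vector \<Rightarrow> real. \<forall>x. \<bar>g x\<bar> \<le> M * norm x}"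
proof -
  have "{g :: 'x \<Rightarrow> real. \<forall>x. \<bar>g x\<bar> \<le> M * norm x} = PiE UNIV (\<lambda>x. cball 0 (M * norm x))"
    by (auto simp: PiE_iff)
  moreover have "compactin (product_topology (\<lambda>_. euclidean) UNIV)
                   (PiE UNIV (\<lambda>x. cball (0::real) (M * norm x)))"
    by (subst compactin_PiE) auto
  ultimately show ?thesis by (simp add: euclidean_product_topology)
qed

lemma weak_star_cluster_point:
  fixes u :: "'i \<Rightarrow> 'x::real_normed_vector dual"
  assumes F: "F \<noteq> bot" and bound: "\<And>i. norm (u i) \<le> M"
  obtains \<phi> :: "'x dual"
    where "\<And>x c. ((\<lambda>i. blinfun_apply (u i) x) \<longlongrightarrow> c) F \<Longrightarrow> blinfun_apply \<phi> x = c"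
proof -
  define S where "S = {g :: 'x \<Rightarrow> real. \<forall>x. \<bar>g x\<bar> \<le> M * norm x}"
  define G where "G = filtermap (\<lambda>i. blinfun_apply (u i)) F"
  have pointwise_bound: "\<bar>blinfun_apply (u i) x\<bar> \<le> M * norm x" for i x
    using norm_blinfun[of "u i" x] bound[of i] by (simp add: order_trans mult_right_mono)
  have "G \<noteq> bot" using F by (simp add: G_def filtermap_bot_iff)
  moreover have "eventually (\<lambda>g. g \<in> S) G"
    unfolding G_def eventually_filtermap S_def using pointwise_bound by simp
  ultimately obtain f where "f \<in> S" and cluster: "inf (nhds f) G \<noteq> bot"
    using compact_pointwise_bounded[of M] unfolding compact_filter S_def by blast
  have inherit: "P f"
    if "closed {g. P g}" and "eventually (\<lambda>i. P (blinfun_apply (u i))) F" for P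
    using cluster_point_in_closed[OF cluster that(1)] that(2)
    by (simp add: G_def eventually_filtermap)
  have evaluation_continuous: "continuous_on UNIV (\<lambda>g::'x \<Rightarrow> real. g x)" for x
    by simp
  have "bounded_linear f"
  proof (rule bounded_linear_intro[where K = M])
    show "f (x + y) = f x + f y" for x y
      by (rule inherit) (auto intro!: closed_Collect_eq continuous_intros
                              evaluation_continuous simp: blinfun.add_right)
    show "f (r *\<^sub>R x) = r *\<^sub>R f x" for r x
      by (rule inherit) (auto intro!: closed_Collect_eq continuous_intros
                              evaluation_continuous simp: blinfun.scaleR_right)
    show "norm (f x) \<le> norm x * M" for x
      using \<open>f \<in> S\<close> by (simp add: S_def mult.commute)
  qed
  then have f_eq: "blinfun_apply (Blinfun f) = f"
    by (rule bounded_linear_Blinfun_apply)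
  show thesis
  proof (rule that[of "Blinfun f"])
    fix x c
    assume lim: "((\<lambda>i. blinfun_apply (u i) x) \<longlongrightarrow> c) F"
    have close: "dist (f x) c \<le> \<epsilon>" if "\<epsilon> > 0" for \<epsilon>
    proof (rule inherit)
      show "closed {g. dist (g x) c \<le> \<epsilon>}"
        by (intro closed_Collect_le continuous_intros evaluation_continuous)
      show "eventually (\<lambda>i. dist (blinfun_apply (u i) x) c \<le> \<epsilon>) F"
        using tendstoD[OF lim that] by (rule eventually_mono) simp
    qed
    have "dist (f x) c \<le> 0"
      by (rule field_le_epsilon) (use close in simp)
    then have "f x = c"
      by simp
    then show "blinfun_apply (Blinfun f) x = c"
      by (simp add: f_eq)
  qed
qed

theorem mainTheorem15:
  fixes \<pi> :: "'a::{real_normed_algebra,banach} \<Rightarrow> 'b::banach \<Rightarrow> 'b"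
    and e :: "'i \<Rightarrow> 'a dual dual"
    and F :: "'i filter"
  assumes "banach_left_module \<pi>"
    and "F \<noteq> bot"
    and "bounded (range e)"
    and "\<forall>b''. ((\<lambda>i. adj3 \<pi> (e i) b'') \<longlongrightarrow> b'') F"
  shows "\<exists>e''. \<forall>b''. adj3 \<pi> e'' b'' = b''"
proof -
  have \<pi>: "bounded_bilinear \<pi>"
    using assms(1) unfolding banach_left_module_def by blast
  obtain M where "\<And>i. norm (e i) \<le> M"
    using assms(3) unfolding bounded_iff by blast
  then obtain e'' where cluster:
    "\<And>p c. ((\<lambda>i. blinfun_apply (e i) p) \<longlongrightarrow> c) F \<Longrightarrow> blinfun_apply e'' p = c"
    using weak_star_cluster_point[OF assms(2)] by blast
  have "adj3 \<pi> e'' b'' = b''" for b''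
  proof (rule blinfun_eqI)
    fix z'
    have "((\<lambda>i. blinfun_apply (adj3 \<pi> (e i) b'') z') \<longlongrightarrow> blinfun_apply b'' z') F"
      using assms(4) by (intro blinfun.tendsto tendsto_const) auto
    then have "((\<lambda>i. blinfun_apply (e i) (adj2 \<pi> b'' z')) \<longlongrightarrow> blinfun_apply b'' z') F"
      by (simp add: adj3_apply[OF \<pi>])
    then show "blinfun_apply (adj3 \<pi> e'' b'') z' = blinfun_apply b'' z'"
      by (simp add: adj3_apply[OF \<pi>] cluster)
  qed
  then show ?thesis by blast
qed

end
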